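(* Let $(X,\sigma,T)$ be as in the context and suppose it has no extra spectrum. Let $\pi^L_{eq}:L\to L_{eq}$ be the maximal equicontinuous factor of $(L,\sigma_L)$ (neutral element $e_{eq}=\pi^L_{eq}(e)$), and let $\eta_0:L_{eq}\to X_{eq}$ be the factor map with $\tilde\pi_{eq}=\eta_0\circ\pi^L_{eq}$. Then $\eta_0$ is bijective and $L^{fib}=(\pi^L_{eq})^{-1}(e_{eq})$.
   Context: $T$ is an abelian group acting continuously by $\sigma$ on a compact Hausdorff space $X$; the action is minimal and not distal. $E(X)$ is the Ellis semigroup (closure of $\{\sigma^t\}$ in $X^X$ with pointwise topology), with $T$-action $\sigma_E^t(f)=\sigma^t\circ f$. $\pi_{eq}:X\to X_{eq}$ is the maximal equicontinuous factor; $X_{eq}$ is a compact abelian group with neutral element $0$ a singular point (a point whose fibre contains two distinct proximal points). Fix a minimal idempotent $e$, $L=E(X)e$, $\sigma_L$ the restriction of $\sigma_E$ to $L$, $\mathcal G=eL$. $\tilde\pi_{eq}:L\to X_{eq}$, $\tilde\pi_{eq}(f)=\pi_{eq}(f(x))-\pi_{eq}(x)$ (independent of $x$); it is an equicontinuous factor of $(L,\sigma_L)$. $L^{fib}=\{f\in L:\tilde\pi_{eq}(f)=0\}$, $\mathcal G^{fib}=\mathcal G\cap L^{fib}$. The little structure group $\Gamma\subset\mathcal G$ is generated by the entries of the sandwich matrix of a Rees matrix representation of the kernel of $E(X)$. For a subgroup $H$ of a right-topological group $G$, $\overline{\mathrm{ncl}_G(H)}$ is the topological closure of the smallest normal subgroup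 of $G$ containing $H$. The system has no extra spectrum (NES) if $\overline{\mathrm{ncl}_{\mathcal G}(\Gamma)}=\mathcal G^{fib}$. *)

theory Defs
  imports "HOL-Analysis.Analysis"
begin

section \<open>Topological dynamics (T an abelian group, treated as discrete)\<close>

definition action :: "('t::ab_group_add \<Rightarrow> 'a \<Rightarrow> 'a) \<Rightarrow> bool" where
  "action \<sigma> \<longleftrightarrow> \<sigma> 0 = id \<and> (\<forall>s t. \<sigma> (s + t) = \<sigma> s \<circ> \<sigma> t)"

definition minimal_sys :: "('t \<Rightarrow> 'a::topological_space \<Rightarrow> 'a) \<Rightarrow> bool" where
  "minimal_sys \<sigma> \<longleftrightarrow> (\<forall>A. closed A \<and> (\<forall>t. \<sigma> t ` A \<subseteq> A) \<longrightarrow> A = {} \<or> A = UNIV)"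

text \<open>Proximality w.r.t. the unique uniformity of a compact Hausdorff space
  (entourages = neighbourhoods of the diagonal).\<close>
definition proximal :: "('t \<Rightarrow> 'a::topological_space \<Rightarrow> 'a) \<Rightarrow> 'a \<Rightarrow> 'a \<Rightarrow> bool" where
  "proximal \<sigma> x y \<longleftrightarrow>
     (\<forall>W. open W \<and> (\<forall>z. (z, z) \<in> W) \<longrightarrow> (\<exists>t. (\<sigma> t x, \<sigma> t y) \<in> W))"

definition distal_sys :: "('t \<Rightarrow> 'a::topological_space \<Rightarrow> 'a) \<Rightarrow> bool" where
  "distal_sys \<sigma> \<longleftrightarrow> (\<forall>x y. proximal \<sigma> x y \<longrightarrow> x = y)"

text \<open>Equicontinuity of the family {rho t} on an abstract topological space Y,
  w.r.t. the unique uniformity of a compact Hausdorff space.\<close>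
definition equicont :: "'b topology \<Rightarrow> ('t \<Rightarrow> 'b \<Rightarrow> 'b) \<Rightarrow> bool" where
  "equicont Y \<rho> \<longleftrightarrow>
     (\<forall>y\<in>topspace Y. \<forall>W. openin (prod_topology Y Y) W \<and> (\<forall>z\<in>topspace Y. (z, z) \<in> W) \<longrightarrow>
        (\<exists>U. openin Y U \<and> y \<in> U \<and> (\<forall>t. \<forall>z\<in>U. (\<rho> t y, \<rho> t z) \<in> W)))"

definition eq_system :: "'b topology \<Rightarrow> ('t \<Rightarrow> 'b \<Rightarrow> 'b) \<Rightarrow> bool" where
  "eq_system Y \<rho> \<longleftrightarrow> compact_space Y \<and> Hausdorff_space Y \<and>
     (\<forall>t. continuous_map Y Y (\<rho> t)) \<and> equicont Y \<rho>"

definition factor_map :: "'a topology \<Rightarrow> ('t \<Rightarrow> 'a \<Rightarrow> 'a) \<Rightarrow> 'b topology \<Rightarrow> ('t \<Rightarrow> 'b \<Rightarrow> 'b)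
    \<Rightarrow> ('a \<Rightarrow> 'b) \<Rightarrow> bool" where
  "factor_map X \<sigma> Y \<rho> \<pi> \<longleftrightarrow> continuous_map X Y \<pi> \<and> \<pi> ` topspace X = topspace Y \<and>
     (\<forall>t. \<forall>x\<in>topspace X. \<pi> (\<sigma> t x) = \<rho> t (\<pi> x))"

text \<open>Every factor of X is isomorphic to a quotient of X, whose points are subsets of X;
  hence it suffices to quantify over factors with state space of type 'a set.\<close>
definition max_eq_factor :: "'a topology \<Rightarrow> ('t \<Rightarrow> 'a \<Rightarrow> 'a) \<Rightarrow> 'b topology \<Rightarrow> ('t \<Rightarrow> 'b \<Rightarrow> 'b)
    \<Rightarrow> ('a \<Rightarrow> 'b) \<Rightarrow> bool" where
  "max_eq_factor X \<sigma> Y \<rho> \<pi> \<longleftrightarrow> factor_map X \<sigma> Y \<rho> \<pi> \<and> eq_system Y \<rho> \<and>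
     (\<forall>(Z::'a set topology) \<rho>' \<psi>. factor_map X \<sigma> Z \<rho>' \<psi> \<and> eq_system Z \<rho>' \<longrightarrow>
        (\<forall>x\<in>topspace X. \<forall>x'\<in>topspace X. \<pi> x = \<pi> x' \<longrightarrow> \<psi> x = \<psi> x'))"

definition Ellis :: "('t \<Rightarrow> 'a \<Rightarrow> 'a::topological_space) \<Rightarrow> ('a \<Rightarrow> 'a) set" where
  "Ellis \<sigma> = closure (range \<sigma>)"

definition left_ideal :: "('a \<Rightarrow> 'a) set \<Rightarrow> ('a \<Rightarrow> 'a) set \<Rightarrow> bool" where
  "left_ideal E I \<longleftrightarrow> I \<subseteq> E \<and> I \<noteq> {} \<and> (\<forall>f\<in>E. \<forall>g\<in>I. f \<circ> g \<in> I)"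

definition minimal_left_ideal :: "('a \<Rightarrow> 'a) set \<Rightarrow> ('a \<Rightarrow> 'a) set \<Rightarrow> bool" where
  "minimal_left_ideal E I \<longleftrightarrow> left_ideal E I \<and> (\<forall>J. left_ideal E J \<and> J \<subseteq> I \<longrightarrow> J = I)"

definition minimal_idempotent :: "('a \<Rightarrow> 'a) set \<Rightarrow> ('a \<Rightarrow> 'a) \<Rightarrow> bool" where
  "minimal_idempotent E e \<longleftrightarrow> e \<in> E \<and> e \<circ> e = e \<and> (\<exists>I. minimal_left_ideal E I \<and> e \<in> I)"

definition Lid :: "('a \<Rightarrow> 'a) set \<Rightarrow> ('a \<Rightarrow> 'a) \<Rightarrow> ('a \<Rightarrow> 'a) set" where
  "Lid E e = {f \<circ> e |f. f \<in> E}"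

definition Grp :: "('a \<Rightarrow> 'a) set \<Rightarrow> ('a \<Rightarrow> 'a) \<Rightarrow> ('a \<Rightarrow> 'a) set" where
  "Grp E e = {e \<circ> f |f. f \<in> Lid E e}"

definition sigmaE :: "('t \<Rightarrow> 'a \<Rightarrow> 'a) \<Rightarrow> 't \<Rightarrow> ('a \<Rightarrow> 'a) \<Rightarrow> ('a \<Rightarrow> 'a)" where
  "sigmaE \<sigma> t f = \<sigma> t \<circ> f"

text \<open>pi-tilde; independent of the base point, which we fix as an arbitrary point.\<close>
definition pitilde :: "('a \<Rightarrow> 'g::ab_group_add) \<Rightarrow> ('a \<Rightarrow> 'a) \<Rightarrow> 'g" where
  "pitilde \<pi> f = \<pi> (f undefined) - \<pi> undefined"

definition Lfib :: "('a \<Rightarrow> 'g::ab_group_add) \<Rightarrow> ('a \<Rightarrow> 'a) set \<Rightarrow> ('a \<Rightarrow> 'a) \<Rightarrow> ('a \<Rightarrow> 'a) set" where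
  "Lfib \<pi> E e = {f \<in> Lid E e. pitilde \<pi> f = 0}"

definition ginv :: "('a \<Rightarrow> 'a) set \<Rightarrow> ('a \<Rightarrow> 'a) \<Rightarrow> ('a \<Rightarrow> 'a) \<Rightarrow> ('a \<Rightarrow> 'a)" where
  "ginv G e a = (THE b. b \<in> G \<and> a \<circ> b = e \<and> b \<circ> a = e)"

definition subgrp :: "('a \<Rightarrow> 'a) set \<Rightarrow> ('a \<Rightarrow> 'a) \<Rightarrow> ('a \<Rightarrow> 'a) set \<Rightarrow> bool" where
  "subgrp G e H \<longleftrightarrow> H \<subseteq> G \<and> e \<in> H \<and> (\<forall>a\<in>H. \<forall>b\<in>H. a \<circ> b \<in> H) \<and> (\<forall>a\<in>H. ginv G e a \<in> H)"

definition normal_subgrp :: "('a \<Rightarrow> 'a) set \<Rightarrow> ('a \<Rightarrow> 'a) \<Rightarrow> ('a \<Rightarrow> 'a) set \<Rightarrow> bool" where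
  "normal_subgrp G e N \<longleftrightarrow> subgrp G e N \<and> (\<forall>g\<in>G. \<forall>n\<in>N. g \<circ> n \<circ> ginv G e g \<in> N)"

definition gen_subgrp :: "('a \<Rightarrow> 'a) set \<Rightarrow> ('a \<Rightarrow> 'a) \<Rightarrow> ('a \<Rightarrow> 'a) set \<Rightarrow> ('a \<Rightarrow> 'a) set" where
  "gen_subgrp G e S = \<Inter>{H. subgrp G e H \<and> S \<subseteq> H}"

definition ncl :: "('a \<Rightarrow> 'a) set \<Rightarrow> ('a \<Rightarrow> 'a) \<Rightarrow> ('a \<Rightarrow> 'a) set \<Rightarrow> ('a \<Rightarrow> 'a) set" where
  "ncl G e H = \<Inter>{N. normal_subgrp G e N \<and> H \<subseteq> N}"

text \<open>Little structure group: generated by the entries v o u of the sandwich matrix of the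
  Rees matrix representation K(E) = I x G x Lambda, (u,g,v) |-> u o g o v, where I are the
  idempotents of the minimal left ideal E e and Lambda the idempotents of the minimal right
  ideal e E.\<close>
definition little_group :: "('a \<Rightarrow> 'a) set \<Rightarrow> ('a \<Rightarrow> 'a) \<Rightarrow> ('a \<Rightarrow> 'a) set" where
  "little_group E e = gen_subgrp (Grp E e) e
     {v \<circ> u |u v. u \<in> Lid E e \<and> u \<circ> u = u \<and> v \<in> {e \<circ> f |f. f \<in> E} \<and> v \<circ> v = v}"

text \<open>No extra spectrum (closure taken in G with the subspace topology of X^X).\<close>
definition NES :: "('a \<Rightarrow> 'g::ab_group_add) \<Rightarrow> ('a \<Rightarrow> 'a::topological_space) set \<Rightarrow> ('a \<Rightarrow> 'a) \<Rightarrow> bool" where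
  "NES \<pi> E e \<longleftrightarrow>
     closure (ncl (Grp E e) e (little_group E e)) \<inter> Grp E e = Grp E e \<inter> Lfib \<pi> E e"

end

theory Submission imports Defs begin

(* The map pitilde is additive on the Ellis semigroup E, so if f, g in L have the same
   pitilde, then f = k o g with pitilde k = 0, and e o k o e lies in G^fib.  By NES, G^fib
   lies in the closure of the normal closure of the little structure group.  That whole
   closure acts trivially on L_eq: the elements of E acting trivially form a closed set
   whose trace on G is a normal subgroup, and it contains every idempotent u, because
   f and u o f are proximal while an equicontinuous factor separates no proximal pair.
   Hence pitilde = eta0 o pi^L_eq determines pi^L_eq, so eta0 is injective (it is onto as
   a factor map), and pitilde e = 0 identifies L^fib with the fibre over e_eq. *)

lemma continuous_on_comp_right: "continuous_on UNIV (\<lambda>k::'a \<Rightarrow> 'b::topological_space. k \<circ> f)"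
  by (intro continuous_on_coordinatewise_then_product) (simp add: o_def)

lemma continuous_on_comp_left:
  fixes s :: "'b::topological_space \<Rightarrow> 'b"
  assumes "continuous_on UNIV s"
  shows "continuous_on UNIV (\<lambda>k::'a \<Rightarrow> 'b. s \<circ> k)"
proof (intro continuous_on_coordinatewise_then_product)
  fix i
  show "continuous_on UNIV (\<lambda>k::'a \<Rightarrow> 'b. (s \<circ> k) i)"
    unfolding o_def
    by (rule continuous_on_compose2[OF assms continuous_on_product_coordinates]) auto
qed

text \<open>A substitute for "equicontinuous systems are distal" that uses equicontinuity
  at p only: pulling back by \<open>\<rho> (-t)\<close>, equicontinuity at p puts \<open>\<rho> (-t) p\<close>
  close to both y and p, which the neighbourhood W of the diagonal forbids.\<close>
lemma equicont_eq_if_orbit_approaches: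
  fixes \<rho> :: "'t::ab_group_add \<Rightarrow> 'h::topological_space \<Rightarrow> 'h"
  assumes haus: "Hausdorff_space (euclidean :: 'h topology)"
    and equi: "equicont euclidean \<rho>"
    and inv: "\<And>t z. \<rho> (-t) (\<rho> t z) = z"
    and approach: "\<And>U. open U \<Longrightarrow> p \<in> U \<Longrightarrow> \<exists>t. \<rho> t y \<in> U \<and> \<rho> t p \<in> U"
  shows "y = p"
proof (rule ccontr)
  assume "y \<noteq> p"
  then have "\<exists>A B. open A \<and> open B \<and> y \<in> A \<and> p \<in> B \<and> A \<inter> B = {}"
    using haus unfolding Hausdorff_space_def disjnt_def by simp
  then obtain A B where AB: "open A" "open B" "y \<in> A" "p \<in> B" "A \<inter> B = {}"
    by blast
  have "closed {y, p}"
    using Hausdorff_imp_t1_space[OF haus] unfolding t1_space_closedin_finite by simp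
  define W where "W = A \<times> A \<union> B \<times> B \<union> (- {y, p}) \<times> (- {y, p})"
  have "openin (prod_topology euclidean euclidean) W"
    unfolding W_def prod_topology_euclidean open_openin[symmetric]
    using AB \<open>closed {y, p}\<close> by (intro open_Un open_Times) (auto simp: open_Compl)
  moreover have "\<forall>z\<in>topspace euclidean. (z, z) \<in> W"
    unfolding W_def using AB by auto
  ultimately have "\<exists>U. openin euclidean U \<and> p \<in> U \<and> (\<forall>t. \<forall>z\<in>U. (\<rho> t p, \<rho> t z) \<in> W)"
    using equi unfolding equicont_def topspace_euclidean by blast
  then obtain U where U: "openin euclidean U" "p \<in> U" "\<forall>t. \<forall>z\<in>U. (\<rho> t p, \<rho> t z) \<in> W"
    by blast
  then obtain t where "\<rho> t y \<in> U" "\<rho> t p \<in> U"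
    using approach by (metis open_openin)
  then have "(\<rho> (-t) p, y) \<in> W" "(\<rho> (-t) p, p) \<in> W"
    using U(3) inv by metis+
  then have "\<rho> (-t) p \<in> A" "\<rho> (-t) p \<in> B"
    unfolding W_def using AB \<open>y \<noteq> p\<close> by auto
  then show False
    using AB(5) by blast
qed

locale flow =
  fixes \<sigma> :: "'t::ab_group_add \<Rightarrow> 'x::topological_space \<Rightarrow> 'x"
  assumes action: "action \<sigma>" and continuous: "\<And>t. continuous_on UNIV (\<sigma> t)"
begin

abbreviation "E \<equiv> Ellis \<sigma>"

lemma closed_Ellis: "closed E"
  unfolding Ellis_def by simp

lemma action_in_Ellis: "\<sigma> t \<in> E"
  unfolding Ellis_def by (rule closure_subset[THEN subsetD]) (rule rangeI)

lemma action_comp_Ellis: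
  assumes "h \<in> E"
  shows "\<sigma> t \<circ> h \<in> E"
proof -
  have "(\<lambda>k. \<sigma> t \<circ> k) ` closure (range \<sigma>) \<subseteq> E"
  proof (rule image_closure_subset)
    show "continuous_on (closure (range \<sigma>)) (\<lambda>k. \<sigma> t \<circ> k)"
      using continuous_on_comp_left[OF continuous] continuous_on_subset by blast
    have "\<sigma> t \<circ> \<sigma> s = \<sigma> (t + s)" for s
      using action unfolding action_def by simp
    then show "(\<lambda>k. \<sigma> t \<circ> k) ` range \<sigma> \<subseteq> E"
      using action_in_Ellis by auto
  qed (rule closed_Ellis)
  then show ?thesis
    using assms unfolding Ellis_def by blast
qed

lemma Ellis_comp_closed:
  assumes "a \<in> E" "b \<in> E"
  shows "a \<circ> b \<in> E"
proof -
  have "(\<lambda>k. k \<circ> b) ` closure (range \<sigma>) \<subseteq> E"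
  proof (rule image_closure_subset)
    show "continuous_on (closure (range \<sigma>)) (\<lambda>k. k \<circ> b)"
      using continuous_on_comp_right continuous_on_subset by blast
    show "(\<lambda>k. k \<circ> b) ` range \<sigma> \<subseteq> E"
      using action_comp_Ellis[OF assms(2)] by auto
  qed (rule closed_Ellis)
  then show ?thesis
    using assms(1) unfolding Ellis_def by blast
qed

end

locale minimal_ideal = flow \<sigma> for \<sigma> :: "'t::ab_group_add \<Rightarrow> 'x::topological_space \<Rightarrow> 'x" +
  fixes e :: "'x \<Rightarrow> 'x"
  assumes minimal_idempotent: "minimal_idempotent (Ellis \<sigma>) e"
begin

abbreviation "L \<equiv> Lid E e"
abbreviation "G \<equiv> Grp E e"

lemma idem_in_Ellis: "e \<in> E" and idem: "e \<circ> e = e"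
  using minimal_idempotent unfolding minimal_idempotent_def by auto

lemma Lid_iff: "f \<in> L \<longleftrightarrow> (\<exists>k\<in>E. f = k \<circ> e)"
  unfolding Lid_def by auto

lemma Lid_subset_Ellis: "f \<in> L \<Longrightarrow> f \<in> E"
  using Lid_iff Ellis_comp_closed idem_in_Ellis by auto

lemma Lid_comp_idem: "f \<in> L \<Longrightarrow> f \<circ> e = f"
  using Lid_iff idem by (metis comp_assoc)

lemma idem_in_Lid: "e \<in> L"
  using Lid_iff idem_in_Ellis idem by metis

lemma Ellis_comp_Lid: "h \<in> E \<Longrightarrow> f \<in> L \<Longrightarrow> h \<circ> f \<in> L"
  using Lid_iff Ellis_comp_closed by (metis comp_assoc)

lemma Grp_iff: "g \<in> G \<longleftrightarrow> (\<exists>f\<in>L. g = e \<circ> f)"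
  unfolding Grp_def by auto

lemma Grp_subset_Lid: "g \<in> G \<Longrightarrow> g \<in> L"
  using Grp_iff Ellis_comp_Lid idem_in_Ellis by auto

lemma idem_comp_Grp: "g \<in> G \<Longrightarrow> e \<circ> g = g"
  using Grp_iff idem by (metis comp_assoc)

lemma Grp_comp_idem: "g \<in> G \<Longrightarrow> g \<circ> e = g"
  using Grp_subset_Lid Lid_comp_idem by blast

lemma idem_in_Grp: "e \<in> G"
  using Grp_iff idem_in_Lid idem by metis

lemma Grp_comp_closed: assumes "a \<in> G" "b \<in> G" shows "a \<circ> b \<in> G"
proof -
  obtain f where "f \<in> L" "a = e \<circ> f"
    using assms(1) Grp_iff by blast
  moreover have "f \<circ> b \<in> L"
    using Ellis_comp_Lid Lid_subset_Ellis Grp_subset_Lid \<open>f \<in> L\<close> assms(2) by blast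
  ultimately show ?thesis
    using Grp_iff by (metis comp_assoc)
qed

lemma Lid_minimal: assumes "g \<in> L" "f \<in> L" shows "\<exists>k\<in>E. f = k \<circ> g"
proof -
  obtain I where I: "minimal_left_ideal E I" "e \<in> I"
    using minimal_idempotent unfolding minimal_idempotent_def by auto
  have "L \<subseteq> I"
  proof
    fix f assume "f \<in> L"
    then obtain k where "k \<in> E" "f = k \<circ> e"
      using Lid_iff by blast
    then show "f \<in> I"
      using I unfolding minimal_left_ideal_def left_ideal_def by blast
  qed
  moreover have "left_ideal E L"
    unfolding left_ideal_def using Lid_subset_Ellis idem_in_Lid Ellis_comp_Lid by blast
  ultimately have "L = I"
    using I unfolding minimal_left_ideal_def by blast
  define J where "J = {k \<circ> g |k. k \<in> E}"
  have "left_ideal E J"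
    unfolding left_ideal_def
  proof (intro conjI ballI)
    show "J \<subseteq> E"
      unfolding J_def using Ellis_comp_closed Lid_subset_Ellis \<open>g \<in> L\<close> by blast
    show "J \<noteq> {}"
      unfolding J_def using idem_in_Ellis by blast
    fix h j assume "h \<in> E" "j \<in> J"
    then obtain k where "k \<in> E" "j = k \<circ> g"
      unfolding J_def by blast
    then have "h \<circ> j = (h \<circ> k) \<circ> g"
      by (simp add: comp_assoc)
    then show "h \<circ> j \<in> J"
      unfolding J_def using Ellis_comp_closed[OF \<open>h \<in> E\<close> \<open>k \<in> E\<close>] by blast
  qed
  moreover have "J \<subseteq> I"
    unfolding J_def using Ellis_comp_Lid \<open>g \<in> L\<close> \<open>L = I\<close> by blast
  ultimately have "J = I"
    using I unfolding minimal_left_ideal_def by blast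
  then show ?thesis
    using \<open>f \<in> L\<close> \<open>L = I\<close> unfolding J_def by blast
qed

lemma Grp_left_inverse: assumes "g \<in> G" shows "\<exists>b\<in>G. b \<circ> g = e"
proof -
  obtain k where k: "k \<in> E" "e = k \<circ> g"
    using Lid_minimal[OF Grp_subset_Lid[OF assms] idem_in_Lid] by blast
  have "k \<circ> e \<in> L"
    using Lid_iff k(1) by blast
  then have "e \<circ> (k \<circ> e) \<in> G"
    using Grp_iff by blast
  moreover have "e \<circ> (k \<circ> e) \<circ> g = e"
    using k idem_comp_Grp[OF assms] idem by (metis comp_assoc)
  ultimately show ?thesis by blast
qed

lemma Grp_inverse: assumes "g \<in> G" shows "\<exists>b\<in>G. b \<circ> g = e \<and> g \<circ> b = e"
proof -
  obtain b where b: "b \<in> G" "b \<circ> g = e"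
    using Grp_left_inverse assms by blast
  obtain c where c: "c \<in> G" "c \<circ> b = e"
    using Grp_left_inverse b by blast
  have "g \<circ> b = c \<circ> b \<circ> g \<circ> b"
    using c idem_comp_Grp assms by simp
  also have "\<dots> = c \<circ> (b \<circ> g) \<circ> b"
    by (simp add: comp_assoc)
  also have "\<dots> = e"
    using b c idem_comp_Grp by (simp add: comp_assoc)
  finally show ?thesis
    using b by blast
qed

lemma ginv_Grp: assumes "g \<in> G"
  shows "ginv G e g \<in> G" "ginv G e g \<circ> g = e" "g \<circ> ginv G e g = e"
proof -
  obtain b where b: "b \<in> G" "b \<circ> g = e" "g \<circ> b = e"
    using Grp_inverse assms by blast
  have "ginv G e g = b"
    unfolding ginv_def
  proof (rule the_equality)
    fix b' assume b': "b' \<in> G \<and> g \<circ> b' = e \<and> b' \<circ> g = e"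
    then have "b' = b \<circ> g \<circ> b'"
      using b idem_comp_Grp by simp
    also have "\<dots> = b \<circ> e"
      using b' by (simp add: comp_assoc)
    also have "\<dots> = b"
      using b Grp_comp_idem by simp
    finally show "b' = b" .
  qed (use b in auto)
  then show "ginv G e g \<in> G" "ginv G e g \<circ> g = e" "g \<circ> ginv G e g = e"
    using b by auto
qed

end

locale ideal_eq_factor = minimal_ideal \<sigma> e
  for \<sigma> :: "'t::ab_group_add \<Rightarrow> 'x::topological_space \<Rightarrow> 'x" and e +
  fixes \<pi>L :: "('x \<Rightarrow> 'x) \<Rightarrow> 'h::topological_space" and \<rho>L :: "'t \<Rightarrow> 'h \<Rightarrow> 'h"
  assumes factor: "factor_map (top_of_set (Lid (Ellis \<sigma>) e)) (sigmaE \<sigma>) euclidean \<rho>L \<pi>L"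
    and equicontinuous: "eq_system euclidean \<rho>L"
begin

lemma piL_continuous: "continuous_on L \<pi>L"
  using factor unfolding factor_map_def by simp

lemma piL_surj: "\<pi>L ` L = UNIV"
  using factor unfolding factor_map_def by simp

lemma piL_equivariant: "f \<in> L \<Longrightarrow> \<pi>L (\<sigma> t \<circ> f) = \<rho>L t (\<pi>L f)"
  using factor unfolding factor_map_def sigmaE_def by simp

lemma Hausdorff_factor: "Hausdorff_space (euclidean :: 'h topology)"
  using equicontinuous unfolding eq_system_def by simp

lemma continuous_on_piL_comp: "f \<in> L \<Longrightarrow> continuous_on E (\<lambda>k. \<pi>L (k \<circ> f))"
  using Ellis_comp_Lid continuous_on_comp_right continuous_on_subset
  by (intro continuous_on_compose2[OF piL_continuous]) blast+

lemma rhoL_inverse: "\<rho>L (-t) (\<rho>L t z) = z"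
proof -
  obtain f where "f \<in> L" "z = \<pi>L f"
    using piL_surj by blast
  moreover have "\<sigma> (-t) \<circ> (\<sigma> t \<circ> f) = f"
    using action unfolding action_def by (metis comp_assoc add.left_inverse id_comp)
  moreover have "\<sigma> t \<circ> f \<in> L"
    using Ellis_comp_Lid action_in_Ellis \<open>f \<in> L\<close> by blast
  ultimately show ?thesis
    using piL_equivariant by metis
qed

lemma piL_comp_cong:
  assumes "h \<in> E" "f \<in> L" "f' \<in> L" "\<pi>L f = \<pi>L f'"
  shows "\<pi>L (h \<circ> f) = \<pi>L (h \<circ> f')"
proof -
  have "h \<in> top_of_set E closure_of range \<sigma>"
    using assms(1) action_in_Ellis unfolding closure_of_subtopology euclidean_closure_of
    by (simp add: Ellis_def image_subset_iff inf_absorb2)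
  moreover have "continuous_map (top_of_set E) euclidean (\<lambda>k. \<pi>L (k \<circ> f))"
    "continuous_map (top_of_set E) euclidean (\<lambda>k. \<pi>L (k \<circ> f'))"
    using continuous_on_piL_comp assms(2,3) by simp_all
  moreover have "\<pi>L (k \<circ> f) = \<pi>L (k \<circ> f')" if "k \<in> range \<sigma>" for k
    using that piL_equivariant assms(2-4) by auto
  ultimately show ?thesis
    using forall_in_closure_of_eq[OF _ Hausdorff_factor, of h "top_of_set E" "range \<sigma>"
        "\<lambda>k. \<pi>L (k \<circ> f)" "\<lambda>k. \<pi>L (k \<circ> f')"] by blast
qed

text \<open>\<open>(f, u \<circ> f)\<close> is a proximal pair: as \<open>\<sigma> t\<close> tends to u, both are carried
  close to \<open>u \<circ> f\<close>.\<close>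
lemma piL_idempotent_comp:
  assumes "u \<in> E" "u \<circ> u = u" "f \<in> L"
  shows "\<pi>L (u \<circ> f) = \<pi>L f"
proof -
  have uf: "u \<circ> f \<in> L"
    using Ellis_comp_Lid assms by blast
  define F where "F k = (\<pi>L (k \<circ> f), \<pi>L (k \<circ> (u \<circ> f)))" for k
  have "continuous_on E F"
    unfolding F_def using continuous_on_piL_comp assms(3) uf by (intro continuous_on_Pair)
  then have F_closure: "F u \<in> closure (F ` range \<sigma>)"
    using continuous_image_closure_subset[of E F "range \<sigma>"] assms(1) unfolding Ellis_def by blast
  have Fu: "F u = (\<pi>L (u \<circ> f), \<pi>L (u \<circ> f))"
    unfolding F_def using assms(2) by (simp add: comp_assoc[symmetric])
  have F_near: "\<exists>t. F (\<sigma> t) \<in> V" if "open V" "F u \<in> V" for V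
    using that F_closure open_Int_closure_eq_empty[OF that(1), of "F ` range \<sigma>"] by blast
  have approach: "\<exists>t. \<rho>L t (\<pi>L f) \<in> U \<and> \<rho>L t (\<pi>L (u \<circ> f)) \<in> U"
    if U: "open U" "\<pi>L (u \<circ> f) \<in> U" for U
  proof -
    have "F u \<in> U \<times> U"
      using Fu U(2) by simp
    then obtain t where "F (\<sigma> t) \<in> U \<times> U"
      using F_near[OF open_Times[OF U(1) U(1)]] by iprover
    then show ?thesis
      unfolding F_def using piL_equivariant assms(3) uf by auto
  qed
  have "equicont euclidean \<rho>L"
    using equicontinuous unfolding eq_system_def by simp
  from equicont_eq_if_orbit_approaches[OF Hausdorff_factor this rhoL_inverse approach]
  show ?thesis ..
qed

definition action_kernel :: "('x \<Rightarrow> 'x) set" where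
  "action_kernel = {g \<in> E. \<forall>f\<in>L. \<pi>L (g \<circ> f) = \<pi>L f}"

lemma closed_action_kernel: "closed action_kernel"
proof -
  have "closed {g \<in> E. \<pi>L (g \<circ> f) = \<pi>L f}" if "f \<in> L" for f
  proof (rule closedin_closed_trans[OF _ closed_Ellis])
    show "closedin (top_of_set E) {g \<in> E. \<pi>L (g \<circ> f) = \<pi>L f}"
      using closedin_continuous_maps_eq[OF Hausdorff_factor, of "top_of_set E" "\<lambda>g. \<pi>L (g \<circ> f)"]
        continuous_on_piL_comp[OF that] by simp
  qed
  then have "closed (E \<inter> (\<Inter>f\<in>L. {g \<in> E. \<pi>L (g \<circ> f) = \<pi>L f}))"
    using closed_Ellis by (intro closed_Int closed_INT) auto
  moreover have "action_kernel = E \<inter> (\<Inter>f\<in>L. {g \<in> E. \<pi>L (g \<circ> f) = \<pi>L f})"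
    unfolding action_kernel_def by auto
  ultimately show ?thesis
    by simp
qed

lemma action_kernelI: "g \<in> E \<Longrightarrow> (\<And>f. f \<in> L \<Longrightarrow> \<pi>L (g \<circ> f) = \<pi>L f) \<Longrightarrow> g \<in> action_kernel"
  unfolding action_kernel_def by blast

lemma action_kernelD: "g \<in> action_kernel \<Longrightarrow> f \<in> L \<Longrightarrow> \<pi>L (g \<circ> f) = \<pi>L f"
  unfolding action_kernel_def by blast

lemma action_kernel_subset_Ellis: "g \<in> action_kernel \<Longrightarrow> g \<in> E"
  unfolding action_kernel_def by blast

lemma idempotent_in_action_kernel: "u \<in> E \<Longrightarrow> u \<circ> u = u \<Longrightarrow> u \<in> action_kernel"
  using piL_idempotent_comp by (intro action_kernelI)

lemma action_kernel_comp_closed: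
  assumes "a \<in> action_kernel" "b \<in> action_kernel"
  shows "a \<circ> b \<in> action_kernel"
proof (rule action_kernelI)
  show "a \<circ> b \<in> E"
    using assms Ellis_comp_closed action_kernel_subset_Ellis by blast
  fix f assume "f \<in> L"
  then have "\<pi>L (a \<circ> (b \<circ> f)) = \<pi>L f"
    using assms action_kernelD action_kernel_subset_Ellis Ellis_comp_Lid by metis
  then show "\<pi>L (a \<circ> b \<circ> f) = \<pi>L f"
    by (simp add: comp_assoc)
qed

lemma piL_comp_action_kernel:
  assumes "g \<in> E" "n \<in> action_kernel" "f \<in> L"
  shows "\<pi>L (g \<circ> n \<circ> f) = \<pi>L (g \<circ> f)"
proof -
  have "\<pi>L (g \<circ> (n \<circ> f)) = \<pi>L (g \<circ> f)"
    using piL_comp_cong[OF assms(1) _ assms(3)] action_kernelD[OF assms(2,3)]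
      Ellis_comp_Lid[OF action_kernel_subset_Ellis[OF assms(2)] assms(3)] by blast
  then show ?thesis
    by (simp add: comp_assoc)
qed

lemma normal_subgrp_action_kernel: "normal_subgrp G e (action_kernel \<inter> G)"
proof -
  have Grp_Ellis: "g \<in> G \<Longrightarrow> g \<in> E" for g
    using Grp_subset_Lid Lid_subset_Ellis by blast
  have kernelI: "c \<in> action_kernel"
    if "c \<in> E" "\<And>f. f \<in> L \<Longrightarrow> \<pi>L (c \<circ> f) = \<pi>L (e \<circ> f)" for c
    using that piL_idempotent_comp[OF idem_in_Ellis idem] by (intro action_kernelI) auto
  have inverse: "ginv G e a \<in> action_kernel" if a: "a \<in> action_kernel" "a \<in> G" for a
  proof (rule kernelI)
    let ?b = "ginv G e a"
    show "?b \<in> E"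
      using ginv_Grp(1)[OF a(2)] Grp_Ellis by blast
    fix f assume "f \<in> L"
    have "\<pi>L (?b \<circ> a \<circ> f) = \<pi>L (?b \<circ> f)"
      using piL_comp_action_kernel[OF \<open>?b \<in> E\<close> a(1) \<open>f \<in> L\<close>] .
    then show "\<pi>L (?b \<circ> f) = \<pi>L (e \<circ> f)"
      using ginv_Grp(2)[OF a(2)] by simp
  qed
  have conjugate: "g \<circ> n \<circ> ginv G e g \<in> action_kernel"
    if g: "g \<in> G" and n: "n \<in> action_kernel" "n \<in> G" for g n
  proof (rule kernelI)
    let ?b = "ginv G e g"
    have "?b \<in> G"
      using ginv_Grp(1)[OF g] .
    then show "g \<circ> n \<circ> ?b \<in> E"
      using Grp_comp_closed g n(2) Grp_Ellis by blast
    fix f assume "f \<in> L"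
    then have "?b \<circ> f \<in> L"
      using Ellis_comp_Lid Grp_Ellis \<open>?b \<in> G\<close> by blast
    then have "\<pi>L (g \<circ> n \<circ> (?b \<circ> f)) = \<pi>L (g \<circ> (?b \<circ> f))"
      using piL_comp_action_kernel[OF Grp_Ellis[OF g] n(1)] by blast
    moreover have "g \<circ> (?b \<circ> f) = e \<circ> f"
      using ginv_Grp(3)[OF g] by (metis comp_assoc)
    ultimately show "\<pi>L (g \<circ> n \<circ> ?b \<circ> f) = \<pi>L (e \<circ> f)"
      by (simp add: comp_assoc)
  qed
  have "subgrp G e (action_kernel \<inter> G)"
    unfolding subgrp_def
  proof (intro conjI ballI)
    show "action_kernel \<inter> G \<subseteq> G" "e \<in> action_kernel \<inter> G"
      using idempotent_in_action_kernel[OF idem_in_Ellis idem] idem_in_Grp by auto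
    fix a b assume "a \<in> action_kernel \<inter> G" "b \<in> action_kernel \<inter> G"
    then show "a \<circ> b \<in> action_kernel \<inter> G"
      using action_kernel_comp_closed Grp_comp_closed by blast
  next
    fix a assume "a \<in> action_kernel \<inter> G"
    then show "ginv G e a \<in> action_kernel \<inter> G"
      using inverse ginv_Grp(1) by blast
  qed
  moreover have "g \<circ> n \<circ> ginv G e g \<in> action_kernel \<inter> G"
    if "g \<in> G" "n \<in> action_kernel \<inter> G" for g n
    using conjugate[OF that(1)] Grp_comp_closed[OF Grp_comp_closed ginv_Grp(1)] that by blast
  ultimately show ?thesis
    unfolding normal_subgrp_def by blast
qed

lemma little_group_subset_action_kernel: "little_group E e \<subseteq> action_kernel \<inter> G"
proof -
  have "v \<circ> u \<in> action_kernel \<inter> G"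
    if uv: "u \<in> L" "u \<circ> u = u" "v \<in> {e \<circ> f |f. f \<in> E}" "v \<circ> v = v" for u v
  proof
    obtain k where k: "k \<in> E" "v = e \<circ> k"
      using uv(3) by blast
    then have "v \<in> E"
      using Ellis_comp_closed idem_in_Ellis by blast
    then show "v \<circ> u \<in> action_kernel"
      using idempotent_in_action_kernel uv(2,4) Lid_subset_Ellis[OF uv(1)]
      by (intro action_kernel_comp_closed)
    have "k \<circ> u \<in> L"
      using Ellis_comp_Lid k(1) uv(1) by blast
    moreover have "v \<circ> u = e \<circ> (k \<circ> u)"
      using k(2) by (simp add: comp_assoc)
    ultimately show "v \<circ> u \<in> G"
      unfolding Grp_iff by blast
  qed
  then show ?thesis
    using normal_subgrp_action_kernel
    unfolding little_group_def gen_subgrp_def normal_subgrp_def by blast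
qed

lemma closure_ncl_little_group_subset: "closure (ncl G e (little_group E e)) \<subseteq> action_kernel"
proof -
  have "ncl G e (little_group E e) \<subseteq> action_kernel"
    unfolding ncl_def using normal_subgrp_action_kernel little_group_subset_action_kernel by blast
  then show ?thesis
    using closed_action_kernel closure_minimal by blast
qed

end

locale rotation_factor = flow \<sigma> for \<sigma> :: "'t::ab_group_add \<Rightarrow> 'x::topological_space \<Rightarrow> 'x" +
  fixes \<pi> :: "'x \<Rightarrow> 'g::{topological_ab_group_add, t2_space}" and \<phi> :: "'t \<Rightarrow> 'g"
  assumes continuous_factor: "continuous_on UNIV \<pi>"
    and rotation: "\<And>t x. \<pi> (\<sigma> t x) = \<pi> x + \<phi> t"
begin

lemma pitilde_shift:
  assumes "h \<in> E"
  shows "\<pi> (h y) = \<pi> y + pitilde \<pi> h"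
proof -
  let ?S = "{h. \<pi> (h y) - \<pi> y = \<pi> (h undefined) - \<pi> undefined}"
  have "continuous_on UNIV (\<lambda>h::'x \<Rightarrow> 'x. \<pi> (h z))" for z
    by (rule continuous_on_compose2[OF continuous_factor continuous_on_product_coordinates]) auto
  then have "closed ?S"
    by (intro closed_Collect_eq continuous_on_diff continuous_on_const) auto
  moreover have "range \<sigma> \<subseteq> ?S"
    using rotation by auto
  ultimately have "E \<subseteq> ?S"
    unfolding Ellis_def by (rule closure_minimal[rotated])
  then show ?thesis
    using assms unfolding pitilde_def by (force simp: algebra_simps)
qed

lemma pitilde_comp:
  assumes "a \<in> E" "b \<in> E"
  shows "pitilde \<pi> (a \<circ> b) = pitilde \<pi> a + pitilde \<pi> b"
  using pitilde_shift[OF assms(1), of "b undefined"] pitilde_shift[OF assms(2), of undefined]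
  unfolding pitilde_def by (simp add: algebra_simps)

end

locale no_extra_spectrum = ideal_eq_factor \<sigma> e \<pi>L \<rho>L + rotation_factor \<sigma> \<pi> \<phi>
  for \<sigma> :: "'t::ab_group_add \<Rightarrow> 'x::topological_space \<Rightarrow> 'x" and e \<pi>L \<rho>L \<pi> \<phi> +
  assumes NES: "NES \<pi> (Ellis \<sigma>) e"
begin

lemma pitilde_idem: "pitilde \<pi> e = 0"
  using pitilde_comp[OF idem_in_Ellis idem_in_Ellis] idem by simp

lemma piL_eq_if_pitilde_eq:
  assumes f: "f \<in> L" and g: "g \<in> L" and eq: "pitilde \<pi> f = pitilde \<pi> g"
  shows "\<pi>L f = \<pi>L g"
proof -
  obtain k where k: "k \<in> E" "f = k \<circ> g"
    using Lid_minimal[OF g f] by blast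
  have "pitilde \<pi> k = 0"
    using pitilde_comp[OF k(1) Lid_subset_Ellis[OF g]] k(2) eq by simp
  text \<open>Since e acts trivially on the factor, the element \<open>e \<circ> k \<circ> e\<close> of G acts like k.\<close>
  define k' where "k' = e \<circ> (k \<circ> e)"
  have "k \<circ> e \<in> L"
    using Lid_iff k(1) by blast
  then have "k' \<in> G"
    unfolding k'_def Grp_iff by blast
  have "pitilde \<pi> k' = 0"
    unfolding k'_def using pitilde_comp idem_in_Ellis k(1) Ellis_comp_closed pitilde_idem \<open>pitilde \<pi> k = 0\<close>
    by simp
  then have "k' \<in> closure (ncl G e (little_group E e))"
    using NES \<open>k' \<in> G\<close> Grp_subset_Lid unfolding NES_def Lfib_def by blast
  then have "\<pi>L (k' \<circ> g) = \<pi>L g"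
    using closure_ncl_little_group_subset action_kernelD g by blast
  moreover have "e \<circ> g \<in> L"
    using Ellis_comp_Lid idem_in_Ellis g by blast
  then have "\<pi>L (k' \<circ> g) = \<pi>L (k \<circ> (e \<circ> g))"
    unfolding k'_def using piL_idempotent_comp[OF idem_in_Ellis idem] Ellis_comp_Lid k(1)
    by (simp add: comp_assoc)
  moreover have "\<pi>L (k \<circ> (e \<circ> g)) = \<pi>L (k \<circ> g)"
    using piL_comp_cong[OF k(1) \<open>e \<circ> g \<in> L\<close> g] piL_idempotent_comp[OF idem_in_Ellis idem g] by blast
  ultimately show ?thesis
    using k(2) by simp
qed

end

theorem mainTheorem3:
  fixes \<sigma> :: "'t::ab_group_add \<Rightarrow> 'x::t2_space \<Rightarrow> 'x"
    and \<pi>eq :: "'x \<Rightarrow> 'g::{topological_ab_group_add, t2_space}"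
    and \<phi> :: "'t \<Rightarrow> 'g"
    and e :: "'x \<Rightarrow> 'x"
    and \<pi>L :: "('x \<Rightarrow> 'x) \<Rightarrow> 'h::topological_space"
    and \<rho>L :: "'t \<Rightarrow> 'h \<Rightarrow> 'h"
    and \<eta>0 :: "'h \<Rightarrow> 'g"
  assumes X_compact: "compact (UNIV :: 'x set)"
    and act: "action \<sigma>"
    and cont: "\<And>t. continuous_on UNIV (\<sigma> t)"
    and minimal: "minimal_sys \<sigma>"
    and not_distal: "\<not> distal_sys \<sigma>"
    and Xeq_compact: "compact (UNIV :: 'g set)"
    and Xeq_mef: "max_eq_factor euclidean \<sigma> euclidean (\<lambda>t y. y + \<phi> t) \<pi>eq"
    and singular: "\<exists>x1 x2. x1 \<noteq> x2 \<and> \<pi>eq x1 = 0 \<and> \<pi>eq x2 = 0 \<and> proximal \<sigma> x1 x2"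
    and e_min: "minimal_idempotent (Ellis \<sigma>) e"
    and nes: "NES \<pi>eq (Ellis \<sigma>) e"
    and Leq_mef: "max_eq_factor (top_of_set (Lid (Ellis \<sigma>) e)) (sigmaE \<sigma>) euclidean \<rho>L \<pi>L"
    and eta0_factor: "factor_map euclidean \<rho>L euclidean (\<lambda>t y. y + \<phi> t) \<eta>0"
    and eta0_comp: "\<forall>f \<in> Lid (Ellis \<sigma>) e. pitilde \<pi>eq f = \<eta>0 (\<pi>L f)"
  shows "bij \<eta>0 \<and> Lfib \<pi>eq (Ellis \<sigma>) e = {f \<in> Lid (Ellis \<sigma>) e. \<pi>L f = \<pi>L e}"
proof -
  have "continuous_on UNIV \<pi>eq" "\<And>t x. \<pi>eq (\<sigma> t x) = \<pi>eq x + \<phi> t"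
    using Xeq_mef unfolding max_eq_factor_def factor_map_def by auto
  then interpret no_extra_spectrum \<sigma> e \<pi>L \<rho>L \<pi>eq \<phi>
    using act cont e_min Leq_mef nes unfolding max_eq_factor_def by unfold_locales auto
  have "inj \<eta>0"
  proof (rule injI)
    fix a b assume "\<eta>0 a = \<eta>0 b"
    obtain f g where "f \<in> L" "a = \<pi>L f" "g \<in> L" "b = \<pi>L g"
      using piL_surj by (metis UNIV_I imageE)
    then have "pitilde \<pi>eq f = pitilde \<pi>eq g"
      using eta0_comp \<open>\<eta>0 a = \<eta>0 b\<close> by simp
    then show "a = b"
      using piL_eq_if_pitilde_eq \<open>f \<in> L\<close> \<open>g \<in> L\<close> \<open>a = \<pi>L f\<close> \<open>b = \<pi>L g\<close> by blast
  qed
  moreover have "surj \<eta>0"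
    using eta0_factor unfolding factor_map_def by simp
  moreover have "pitilde \<pi>eq f = 0 \<longleftrightarrow> \<pi>L f = \<pi>L e" if "f \<in> L" for f
  proof
    show "pitilde \<pi>eq f = 0 \<Longrightarrow> \<pi>L f = \<pi>L e"
      using piL_eq_if_pitilde_eq[OF that idem_in_Lid] pitilde_idem by simp
    show "\<pi>L f = \<pi>L e \<Longrightarrow> pitilde \<pi>eq f = 0"
      using eta0_comp that idem_in_Lid pitilde_idem by metis
  qed
  ultimately show ?thesis
    unfolding bij_def Lfib_def by blast
qed

end
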